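(* Under the hypotheses of the preceding setting (random perfect matching $\mathbf M$ of two $n$-sets $V,W$; partitions $A_0,\dots,A_s$ of $V$ and $B_0,\dots,B_t$ of $W$ into nonempty parts with $s,t$ fixed, $a_i=|A_i|$, $b_j=|B_j|$; nonnegative integers $e_{ij}$ with $\sum_je_{ij}=a_i$, $\sum_ie_{ij}=b_j$; $\mu_{ij}=a_ib_j/n$, $e_{ij}=\mu_{ij}(1+\epsilon_{ij})$, $E_{ij}$ the number of edges of $\mathbf M$ between $A_i$ and $B_j$), there is a constant $C=C(s,t)$ such that \[\mathbb{P}\Big(\bigcap_{i,j}\{E_{ij}=e_{ij}\}\Big)\le C\Big(\prod_{1\le i\le s}a_i\prod_{1\le j\le t}b_j\Big)^{1/4}\exp\Big(-\sum_{i,j}\mu_{ij}\big[(1+\epsilon_{ij})\log(1+\epsilon_{ij})-\epsilon_{ij}\big]\Big),\] with the convention that the bracket equals $1$ when $\epsilon_{ij}=-1$.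
   Context: Logarithms are natural; $C$ does not depend on $n$ or on the sets. *)

theory Defs
  imports "HOL-Probability.Probability"
begin

definition perfect_matchings :: "'a set \<Rightarrow> 'b set \<Rightarrow> ('a \<Rightarrow> 'b) set" where
  "perfect_matchings V W = {f \<in> V \<rightarrow>\<^sub>E W. bij_betw f V W}"

definition indexed_partition :: "'a set \<Rightarrow> (nat \<Rightarrow> 'a set) \<Rightarrow> nat \<Rightarrow> bool" where
  "indexed_partition V A s \<longleftrightarrow>
     (\<forall>i\<le>s. A i \<noteq> {}) \<and> (\<forall>i\<le>s. \<forall>j\<le>s. i \<noteq> j \<longrightarrow> A i \<inter> A j = {}) \<and> (\<Union>i\<le>s. A i) = V"

definition edge_count :: "('a \<Rightarrow> 'b) \<Rightarrow> (nat \<Rightarrow> 'a set) \<Rightarrow> (nat \<Rightarrow> 'b set) \<Rightarrow> nat \<Rightarrow> nat \<Rightarrow> nat" where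
  "edge_count f A B i j = card {v \<in> A i. f v \<in> B j}"

definition matching_prob :: "'a set \<Rightarrow> 'b set \<Rightarrow> (nat \<Rightarrow> 'a set) \<Rightarrow> (nat \<Rightarrow> 'b set)
    \<Rightarrow> nat \<Rightarrow> nat \<Rightarrow> (nat \<Rightarrow> nat \<Rightarrow> nat) \<Rightarrow> real" where
  "matching_prob V W A B s t e =
     measure_pmf.prob (pmf_of_set (perfect_matchings V W))
       {f. \<forall>i\<le>s. \<forall>j\<le>t. edge_count f A B i j = e i j}"

definition bracket :: "real \<Rightarrow> real" where
  "bracket x = (if x = -1 then 1 else (1 + x) * ln (1 + x) - x)"

end

theory Submission
  imports Defs
begin

(* Part 1 counts these matchings exactly: their number times the product of all e_ij!
   equals the product of all a_i! and b_j!.  The proof is by induction on n: fixing a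
   vertex v of A_i0, the matchings sending v to a given w in B_j0 are in bijection with
   the matchings of the instance with v and w removed and e_i0j0 lowered by one.  With
   s = t = 0 this also gives n! perfect matchings, so the probability is
   a_0!..a_s! b_0!..b_t! / (n! prod e_ij!).

   Writing ln m! = m ln m - m + D(m), the logarithm of this ratio
   plus the exponent sum_ij mu_ij[(1+eps_ij) ln(1+eps_ij) - eps_ij] equals exactly
   sum D(a_i) + sum D(b_j) - D(n) - sum D(e_ij).  The elementary Stirling-type bounds
   ln(m+1)/2 <= D(m) <= 1 + ln(m+1)/2 together with ln(a_i+1) <= sum_j ln(e_ij+1) and its
   column analogue then bound this by s + t + 2 + ((s+t) ln 2 + ln(a_1..a_s b_1..b_t))/4,
   which is the corollary with C = exp(s + t + 2 + (s+t) ln 2 / 4). *)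

section \<open>Counting perfect matchings with prescribed edge counts\<close>

lemma perfect_matching_remove_edge:
  assumes f: "f \<in> perfect_matchings V W" and v: "v \<in> V" and fv: "f v = w"
  shows "f(v:=undefined) \<in> perfect_matchings (V-{v}) (W-{w})"
proof -
  have fe: "f \<in> V \<rightarrow>\<^sub>E W" and b: "bij_betw f V W" using f by (auto simp: perfect_matchings_def)
  have b2: "bij_betw f (V-{v}) (W-{w})"
    using b v fv by (auto simp: bij_betw_def inj_on_def)
  have "bij_betw (f(v:=undefined)) (V-{v}) (W-{w})"
    using b2 by (rule bij_betw_cong[THEN iffD1, rotated]) auto
  moreover have "f(v:=undefined) \<in> (V-{v}) \<rightarrow>\<^sub>E (W-{w})"
    using fe b2 by (auto simp: PiE_def extensional_def bij_betw_def Pi_def)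
  ultimately show ?thesis by (simp add: perfect_matchings_def)
qed

lemma perfect_matching_add_edge:
  assumes g: "g \<in> perfect_matchings (V-{v}) (W-{w})" and v: "v \<in> V" and w: "w \<in> W"
  shows "g(v:=w) \<in> perfect_matchings V W"
proof -
  have ge: "g \<in> (V-{v}) \<rightarrow>\<^sub>E (W-{w})" and b: "bij_betw g (V-{v}) (W-{w})"
    using g by (auto simp: perfect_matchings_def)
  have "bij_betw (g(v:=w)) (V-{v}) (W-{w})"
    using b by (rule bij_betw_cong[THEN iffD1, rotated]) auto
  hence "bij_betw (g(v:=w)) ((V-{v}) \<union> {v}) ((W-{w}) \<union> {w})"
    by (rule bij_betw_combine) auto
  moreover have "(V-{v}) \<union> {v} = V" "(W-{w}) \<union> {w} = W" using v w by auto
  ultimately have "bij_betw (g(v:=w)) V W" by simp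
  moreover have "g(v:=w) \<in> V \<rightarrow>\<^sub>E W"
    using ge w v by (auto simp: PiE_def extensional_def Pi_def)
  ultimately show ?thesis by (simp add: perfect_matchings_def)
qed

lemma finite_perfect_matchings:
  assumes "finite V" "finite W"
  shows "finite (perfect_matchings V W)"
  by (rule finite_subset[OF _ finite_PiE[OF assms]]) (auto simp: perfect_matchings_def)

lemma edge_count_pos:
  assumes "v \<in> A i" "f v \<in> B j" "finite (A i)"
  shows "0 < edge_count f A B i j"
  using assms unfolding edge_count_def by (subst card_gt_0_iff) auto

lemma edge_count_remove_edge:
  assumes f: "f \<in> perfect_matchings V W" and fv: "f v = w"
    and dA: "disjoint_family_on A {..s}" and dB: "disjoint_family_on B {..t}"
    and AV: "\<And>i. i \<le> s \<Longrightarrow> A i \<subseteq> V" and finV: "finite V"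
    and vA: "v \<in> A i0" and i0: "i0 \<le> s" and wB: "w \<in> B j0" and j0: "j0 \<le> t"
    and i: "i \<le> s" and j: "j \<le> t"
  shows "edge_count (f(v:=undefined)) (A(i0 := A i0 - {v})) (B(j0 := B j0 - {w})) i j
         = edge_count f A B i j - (if i = i0 \<and> j = j0 then 1 else 0)"
proof -
  have inj: "inj_on f V" using f by (auto simp: perfect_matchings_def bij_betw_def)
  have vV: "v \<in> V" using AV[OF i0] vA by auto
  have vAi: "v \<in> A i \<longleftrightarrow> i = i0" using dA vA i i0 by (auto simp: disjoint_family_on_def)
  have wBj: "w \<in> B j \<longleftrightarrow> j = j0" using dB wB j j0 by (auto simp: disjoint_family_on_def)
  have "f u \<noteq> w" if "u \<in> A i" "u \<noteq> v" for u
    using inj vV AV[OF i] that fv by (auto simp: inj_on_def)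
  hence eq: "{u \<in> (A(i0 := A i0 - {v})) i. (f(v:=undefined)) u \<in> (B(j0 := B j0 - {w})) j}
        = {u \<in> A i. f u \<in> B j} - {v}"
    using vAi by auto
  have "v \<in> {u \<in> A i. f u \<in> B j} \<longleftrightarrow> i = i0 \<and> j = j0" using vAi wBj fv by auto
  moreover have "finite {u \<in> A i. f u \<in> B j}"
    using AV[OF i] finV by (auto intro: finite_subset)
  ultimately show ?thesis unfolding edge_count_def eq by (simp add: card_Diff_singleton_if)
qed

definition matchings_with_counts ::
    "'a set \<Rightarrow> 'b set \<Rightarrow> (nat \<Rightarrow> 'a set) \<Rightarrow> (nat \<Rightarrow> 'b set) \<Rightarrow> nat \<Rightarrow> nat
       \<Rightarrow> (nat \<Rightarrow> nat \<Rightarrow> nat) \<Rightarrow> ('a \<Rightarrow> 'b) set" where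
  "matchings_with_counts V W A B s t e =
     {f \<in> perfect_matchings V W. \<forall>i\<le>s. \<forall>j\<le>t. edge_count f A B i j = e i j}"

definition contingency_setting ::
    "'a set \<Rightarrow> 'b set \<Rightarrow> (nat \<Rightarrow> 'a set) \<Rightarrow> (nat \<Rightarrow> 'b set) \<Rightarrow> nat \<Rightarrow> nat
       \<Rightarrow> (nat \<Rightarrow> nat \<Rightarrow> nat) \<Rightarrow> bool" where
  "contingency_setting V W A B s t e \<longleftrightarrow> finite V \<and> finite W \<and> card V = card W \<and>
     disjoint_family_on A {..s} \<and> (\<Union>i\<le>s. A i) = V \<and>
     disjoint_family_on B {..t} \<and> (\<Union>j\<le>t. B j) = W \<and>
     (\<forall>i\<le>s. (\<Sum>j\<le>t. e i j) = card (A i)) \<and> (\<forall>j\<le>t. (\<Sum>i\<le>s. e i j) = card (B j))"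

definition decrement_entry :: "(nat \<Rightarrow> nat \<Rightarrow> nat) \<Rightarrow> nat \<Rightarrow> nat \<Rightarrow> nat \<Rightarrow> nat \<Rightarrow> nat" where
  "decrement_entry e i0 j0 = e(i0 := (e i0)(j0 := e i0 j0 - 1))"

lemma decrement_entry_apply:
  "decrement_entry e i0 j0 i j = (if i = i0 \<and> j = j0 then e i j - 1 else e i j)"
  by (simp add: decrement_entry_def)

lemma sum_decrement_one:
  fixes g h :: "'i \<Rightarrow> nat"
  assumes "finite S" "x \<in> S" "\<And>y. y \<in> S \<Longrightarrow> y \<noteq> x \<Longrightarrow> h y = g y" "h x = g x - 1" "1 \<le> g x"
  shows "sum h S = sum g S - 1"
proof -
  have "sum h (S - {x}) = sum g (S - {x})" using assms(3) by (intro sum.cong) auto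
  thus ?thesis using sum.remove[OF assms(1,2), of g] sum.remove[OF assms(1,2), of h] assms(4,5)
    by simp
qed

lemma contingency_setting_remove_edge:
  assumes G: "contingency_setting V W A B s t e"
    and i0: "i0 \<le> s" and j0: "j0 \<le> t" and vA: "v \<in> A i0" and wB: "w \<in> B j0"
    and e1: "1 \<le> e i0 j0"
  shows "contingency_setting (V-{v}) (W-{w}) (A(i0 := A i0 - {v})) (B(j0 := B j0 - {w}))
           s t (decrement_entry e i0 j0)"
  unfolding contingency_setting_def
proof (intro conjI allI impI)
  have finV: "finite V" and finW: "finite W" and cVW: "card V = card W"
    and dA: "disjoint_family_on A {..s}" and UA: "(\<Union>i\<le>s. A i) = V"
    and dB: "disjoint_family_on B {..t}" and UB: "(\<Union>j\<le>t. B j) = W"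
    using G by (auto simp: contingency_setting_def)
  have vAi: "v \<in> A i \<longleftrightarrow> i = i0" if "i \<le> s" for i
    using dA vA that i0 by (auto simp: disjoint_family_on_def)
  have wBj: "w \<in> B j \<longleftrightarrow> j = j0" if "j \<le> t" for j
    using dB wB that j0 by (auto simp: disjoint_family_on_def)
  show "finite (V - {v})" "finite (W - {w})" using finV finW by auto
  have "v \<in> V" "w \<in> W" using vA wB i0 j0 UA UB by auto
  thus "card (V - {v}) = card (W - {w})" using cVW finV finW by simp
  show "disjoint_family_on (A(i0 := A i0 - {v})) {..s}"
    using dA unfolding disjoint_family_on_def by auto
  show "disjoint_family_on (B(j0 := B j0 - {w})) {..t}"
    using dB unfolding disjoint_family_on_def by auto
  show "(\<Union>i\<le>s. (A(i0 := A i0 - {v})) i) = V - {v}" using UA vAi i0 by (auto split: if_splits)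
  show "(\<Union>j\<le>t. (B(j0 := B j0 - {w})) j) = W - {w}" using UB wBj j0 by (auto split: if_splits)
next
  fix i assume i: "i \<le> s"
  have rs: "(\<Sum>j\<le>t. e i j) = card (A i)" and finA: "finite (A i0)"
    using G i i0 by (auto simp: contingency_setting_def intro: finite_subset)
  show "(\<Sum>j\<le>t. decrement_entry e i0 j0 i j) = card ((A(i0 := A i0 - {v})) i)"
  proof (cases "i = i0")
    case True
    have "(\<Sum>j\<le>t. decrement_entry e i0 j0 i j) = (\<Sum>j\<le>t. e i j) - 1"
      by (rule sum_decrement_one[where x=j0]) (use j0 e1 True in \<open>auto simp: decrement_entry_apply\<close>)
    thus ?thesis using rs True vA finA by simp
  qed (use rs in \<open>simp add: decrement_entry_apply\<close>)
next
  fix j assume j: "j \<le> t"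
  have cs: "(\<Sum>i\<le>s. e i j) = card (B j)" and finB: "finite (B j0)"
    using G j j0 by (auto simp: contingency_setting_def intro: finite_subset)
  show "(\<Sum>i\<le>s. decrement_entry e i0 j0 i j) = card ((B(j0 := B j0 - {w})) j)"
  proof (cases "j = j0")
    case True
    have "(\<Sum>i\<le>s. decrement_entry e i0 j0 i j) = (\<Sum>i\<le>s. e i j) - 1"
      by (rule sum_decrement_one[where x=i0]) (use i0 e1 True in \<open>auto simp: decrement_entry_apply\<close>)
    thus ?thesis using cs True wB finB by simp
  qed (use cs in \<open>simp add: decrement_entry_apply\<close>)
qed

lemma card_matchings_through_edge:
  assumes G: "contingency_setting V W A B s t e"
    and i0: "i0 \<le> s" and j0: "j0 \<le> t" and vA: "v \<in> A i0" and wB: "w \<in> B j0"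
    and e1: "1 \<le> e i0 j0"
  shows "card {f \<in> matchings_with_counts V W A B s t e. f v = w}
       = card (matchings_with_counts (V-{v}) (W-{w}) (A(i0 := A i0 - {v})) (B(j0 := B j0 - {w}))
                 s t (decrement_entry e i0 j0))"
    (is "card ?X = card ?Y")
proof (rule bij_betw_same_card[of "\<lambda>f. f(v:=undefined)"],
       rule bij_betw_byWitness[where f'="\<lambda>g. g(v:=w)"])
  have finV: "finite V" and dA: "disjoint_family_on A {..s}" and UA: "(\<Union>i\<le>s. A i) = V"
    and dB: "disjoint_family_on B {..t}" and UB: "(\<Union>j\<le>t. B j) = W"
    using G by (auto simp: contingency_setting_def)
  have AV: "\<And>i. i \<le> s \<Longrightarrow> A i \<subseteq> V" using UA by auto
  have vV: "v \<in> V" and wW: "w \<in> W" using vA wB i0 j0 UA UB by auto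
  have counts: "edge_count (f(v:=undefined)) (A(i0 := A i0 - {v})) (B(j0 := B j0 - {w})) i j
         = edge_count f A B i j - (if i = i0 \<and> j = j0 then 1 else 0)"
    if "f \<in> perfect_matchings V W" "f v = w" "i \<le> s" "j \<le> t" for f i j
    by (rule edge_count_remove_edge[OF that(1,2) dA dB AV finV vA i0 wB j0 that(3,4)])
  show "\<forall>f\<in>?X. (f(v:=undefined))(v:=w) = f" by auto
  show "\<forall>g\<in>?Y. (g(v:=w))(v:=undefined) = g"
    by (auto simp: matchings_with_counts_def perfect_matchings_def PiE_def extensional_def)
  show "(\<lambda>f. f(v:=undefined)) ` ?X \<subseteq> ?Y"
  proof (rule image_subsetI)
    fix f assume "f \<in> ?X"
    then have fv: "f v = w" and fP: "f \<in> perfect_matchings V W" and fe: "\<forall>i\<le>s. \<forall>j\<le>t. edge_count f A B i j = e i j"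
      by (auto simp: matchings_with_counts_def)
    show "f(v:=undefined) \<in> ?Y"
      unfolding matchings_with_counts_def
      using perfect_matching_remove_edge[OF fP vV fv] counts[OF fP fv] fe
      by (auto simp: decrement_entry_apply)
  qed
  show "(\<lambda>g. g(v:=w)) ` ?Y \<subseteq> ?X"
  proof (rule image_subsetI)
    fix g assume "g \<in> ?Y"
    then have gP: "g \<in> perfect_matchings (V-{v}) (W-{w})"
      and ge: "\<forall>i\<le>s. \<forall>j\<le>t. edge_count g (A(i0 := A i0 - {v})) (B(j0 := B j0 - {w})) i j
                              = decrement_entry e i0 j0 i j"
      by (auto simp: matchings_with_counts_def)
    define f where "f = g(v:=w)"
    have fP: "f \<in> perfect_matchings V W" unfolding f_def by (rule perfect_matching_add_edge[OF gP vV wW])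
    have fv: "f v = w" by (simp add: f_def)
    have gf: "f(v:=undefined) = g"
      using gP by (auto simp: f_def perfect_matchings_def PiE_def extensional_def)
    have pos: "0 < edge_count f A B i0 j0"
      using edge_count_pos[of v A i0 f B j0] vA wB fv AV[OF i0] finV by (auto intro: finite_subset)
    have "edge_count f A B i j = e i j" if "i \<le> s" "j \<le> t" for i j
      using counts[OF fP fv that] ge that gf pos e1 by (auto simp: decrement_entry_apply split: if_splits)
    thus "g(v:=w) \<in> ?X" using fP fv by (auto simp: f_def matchings_with_counts_def)
  qed
qed

lemma prod_change_one_factor:
  fixes G H :: "'i \<Rightarrow> 'a::comm_monoid_mult"
  assumes "finite S" "x \<in> S" "\<And>y. y \<in> S \<Longrightarrow> y \<noteq> x \<Longrightarrow> G y = H y" "G x = c * H x"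
  shows "prod G S = c * prod H S"
proof -
  have "prod G (S - {x}) = prod H (S - {x})" using assms(3) by (intro prod.cong) auto
  thus ?thesis using prod.remove[OF assms(1,2), of G] prod.remove[OF assms(1,2), of H] assms(4)
    by (simp add: ac_simps)
qed

lemma fact_card_remove:
  assumes "finite X" "x \<in> X"
  shows "fact (card X) = card X * fact (card (X - {x}))"
proof -
  have "0 < card X" using assms card_gt_0_iff by blast
  thus ?thesis using assms by (simp add: fact_reduce)
qed

lemma prod_fact_decrement_entry:
  assumes "i0 \<le> s" "j0 \<le> t" "1 \<le> e i0 j0"
  shows "(\<Prod>i\<le>s. \<Prod>j\<le>t. fact (e i j) :: nat)
       = e i0 j0 * (\<Prod>i\<le>s. \<Prod>j\<le>t. fact (decrement_entry e i0 j0 i j))"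
proof (rule prod_change_one_factor[where x=i0])
  have "fact (e i0 j0) = e i0 j0 * (fact (e i0 j0 - 1) :: nat)"
    using assms(3) by (simp add: fact_reduce)
  thus "(\<Prod>j\<le>t. fact (e i0 j) :: nat) = e i0 j0 * (\<Prod>j\<le>t. fact (decrement_entry e i0 j0 i0 j))"
    by (intro prod_change_one_factor[where x=j0]) (use assms(2) in \<open>auto simp: decrement_entry_apply\<close>)
qed (use assms(1) in \<open>auto simp: decrement_entry_apply\<close>)

lemma prod_fact_card_remove:
  fixes A :: "nat \<Rightarrow> 'a set"
  assumes "i0 \<le> s" "finite (A i0)" "v \<in> A i0"
  shows "(\<Prod>i\<le>s. fact (card (A i)) :: nat)
       = card (A i0) * (\<Prod>i\<le>s. fact (card ((A(i0 := A i0 - {v})) i)))"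
proof (rule prod_change_one_factor[where x=i0])
  show "fact (card (A i0)) = card (A i0) * fact (card ((A(i0 := A i0 - {v})) i0))"
    using fact_card_remove[OF assms(2,3)] by simp
qed (use assms(1) in auto)

lemma card_by_image_of_vertex:
  fixes B :: "nat \<Rightarrow> 'b set"
  assumes X: "finite X" "\<And>f. f \<in> X \<Longrightarrow> f v \<in> (\<Union>j\<le>t. B j)"
    and B: "disjoint_family_on B {..t}" "\<And>j. j \<le> t \<Longrightarrow> finite (B j)"
  shows "card X = (\<Sum>j\<le>t. \<Sum>w\<in>B j. card {f \<in> X. f v = w})"
proof -
  have "card X = card (\<Union>w\<in>(\<Union>j\<le>t. B j). {f \<in> X. f v = w})"
    using X(2) by (intro arg_cong[where f=card]) auto
  also have "\<dots> = (\<Sum>w\<in>(\<Union>j\<le>t. B j). card {f \<in> X. f v = w})"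
    by (rule card_UN_disjoint) (use X(1) B(2) in \<open>auto intro!: finite_UN_I\<close>)
  also have "\<dots> = (\<Sum>j\<le>t. \<Sum>w\<in>B j. card {f \<in> X. f v = w})"
    by (rule sum.UNION_disjoint) (use B in \<open>auto simp: disjoint_family_on_def\<close>)
  finally show ?thesis .
qed

lemma sum_of_fibres:
  fixes c :: "'b \<Rightarrow> nat" and B :: "nat \<Rightarrow> 'b set"
  assumes a: "0 < a" and r: "(\<Sum>j\<le>t. r j) = a" and finB: "\<And>j. j \<le> t \<Longrightarrow> finite (B j)"
    and empty: "\<And>j. j \<le> t \<Longrightarrow> B j = {} \<Longrightarrow> r j = 0"
    and share: "\<And>j w. j \<le> t \<Longrightarrow> w \<in> B j \<Longrightarrow> a * card (B j) * c w * F = r j * P"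
  shows "(\<Sum>j\<le>t. \<Sum>w\<in>B j. c w) * F = P"
proof -
  have column: "a * (\<Sum>w\<in>B j. c w) * F = r j * P" if j: "j \<le> t" for j
  proof (cases "B j = {}")
    case False
    have "card (B j) * (a * (\<Sum>w\<in>B j. c w) * F) = (\<Sum>w\<in>B j. a * card (B j) * c w * F)"
      by (simp add: sum_distrib_left sum_distrib_right ac_simps)
    also have "\<dots> = card (B j) * (r j * P)" using share[OF j] by simp
    finally show ?thesis using False finB[OF j] by simp
  qed (use empty[OF j] in simp)
  have "a * ((\<Sum>j\<le>t. \<Sum>w\<in>B j. c w) * F) = (\<Sum>j\<le>t. r j) * P"
    using column by (simp add: sum_distrib_left sum_distrib_right ac_simps)
  thus ?thesis using a r by simp
qed

theorem card_matchings_with_counts: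
  assumes "contingency_setting V W A B s t e"
  shows "card (matchings_with_counts V W A B s t e) * (\<Prod>i\<le>s. \<Prod>j\<le>t. fact (e i j))
         = (\<Prod>i\<le>s. fact (card (A i))) * (\<Prod>j\<le>t. fact (card (B j)))"
  using assms
proof (induction "card V" arbitrary: V W A B e)
  case 0
  note G = "0.prems"[unfolded contingency_setting_def]
  have V: "V = {}" and W: "W = {}" using G "0.hyps" by auto
  have A: "A i = {}" if "i \<le> s" for i using V G that by auto
  have B: "B j = {}" if "j \<le> t" for j using W G that by auto
  have e: "e i j = 0" if "i \<le> s" "j \<le> t" for i j
    using G A that by auto
  have "perfect_matchings V W = {\<lambda>x. undefined}"
    unfolding V W perfect_matchings_def by (auto simp: bij_betw_def)
  hence "matchings_with_counts V W A B s t e = {\<lambda>x. undefined}"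
    unfolding matchings_with_counts_def using A e by (auto simp: edge_count_def)
  thus ?case using A B e by simp
next
  case (Suc n)
  note G = Suc.prems[unfolded contingency_setting_def]
  have finV: "finite V" and finW: "finite W" and UA: "(\<Union>i\<le>s. A i) = V"
    and dB: "disjoint_family_on B {..t}" and UB: "(\<Union>j\<le>t. B j) = W"
    and rs: "\<And>i. i \<le> s \<Longrightarrow> (\<Sum>j\<le>t. e i j) = card (A i)"
    and cs: "\<And>j. j \<le> t \<Longrightarrow> (\<Sum>i\<le>s. e i j) = card (B j)" using G by auto
  have finA: "\<And>i. i \<le> s \<Longrightarrow> finite (A i)" using UA finV by (auto intro: finite_subset)
  have finB: "\<And>j. j \<le> t \<Longrightarrow> finite (B j)" using UB finW by (auto intro: finite_subset)
  obtain v where vV: "v \<in> V" using Suc.hyps(2) by (metis card.empty ex_in_conv nat.distinct(1))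
  obtain i0 where i0: "i0 \<le> s" and vA: "v \<in> A i0" using vV UA by auto
  have a0: "0 < card (A i0)" using vA finA[OF i0] card_gt_0_iff by blast
  define X where "X = matchings_with_counts V W A B s t e"
  define F where "F = (\<Prod>i\<le>s. \<Prod>j\<le>t. fact (e i j) :: nat)"
  define PA where "PA = (\<Prod>i\<le>s. fact (card (A i)) :: nat)"
  define PB where "PB = (\<Prod>j\<le>t. fact (card (B j)) :: nat)"
  have fibre: "card (A i0) * card (B j) * card {f \<in> X. f v = w} * F = e i0 j * (PA * PB)"
    if j: "j \<le> t" and wB: "w \<in> B j" for j w
  proof (cases "e i0 j = 0")
    case True
    have "f v \<noteq> w" if "f \<in> X" for f
      using that edge_count_pos[of v A i0 f B j] True vA wB finA[OF i0] i0 j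
      by (auto simp: X_def matchings_with_counts_def)
    hence "card {f \<in> X. f v = w} = 0" by (simp add: card_eq_0_iff)
    thus ?thesis using True by simp
  next
    case False
    define A' where "A' = A(i0 := A i0 - {v})"
    define B' where "B' = B(j := B j - {w})"
    define e' where "e' = decrement_entry e i0 j"
    have e1: "1 \<le> e i0 j" using False by simp
    have G': "contingency_setting (V-{v}) (W-{w}) A' B' s t e'"
      unfolding A'_def B'_def e'_def
      by (rule contingency_setting_remove_edge[OF Suc.prems i0 j vA wB e1])
    have "card (matchings_with_counts (V-{v}) (W-{w}) A' B' s t e') * (\<Prod>i\<le>s. \<Prod>j\<le>t. fact (e' i j))
          = (\<Prod>i\<le>s. fact (card (A' i))) * (\<Prod>j\<le>t. fact (card (B' j)))"
      by (rule Suc.hyps(1)[OF _ G']) (use Suc.hyps(2) vV finV in simp)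
    moreover have "card {f \<in> X. f v = w} = card (matchings_with_counts (V-{v}) (W-{w}) A' B' s t e')"
      unfolding X_def A'_def B'_def e'_def
      by (rule card_matchings_through_edge[OF Suc.prems i0 j vA wB e1])
    moreover have "F = e i0 j * (\<Prod>i\<le>s. \<Prod>j\<le>t. fact (e' i j))"
      unfolding F_def e'_def by (rule prod_fact_decrement_entry[where e=e, OF i0 j e1])
    moreover have "PA = card (A i0) * (\<Prod>i\<le>s. fact (card (A' i)))"
      unfolding PA_def A'_def by (rule prod_fact_card_remove[where A=A, OF i0 finA[OF i0] vA])
    moreover have "PB = card (B j) * (\<Prod>j\<le>t. fact (card (B' j)))"
      unfolding PB_def B'_def by (rule prod_fact_card_remove[where A=B, OF j finB[OF j] wB])
    ultimately show ?thesis by (simp add: ac_simps)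
  qed
  have "card X = (\<Sum>j\<le>t. \<Sum>w\<in>B j. card {f \<in> X. f v = w})"
  proof (rule card_by_image_of_vertex[OF _ _ dB finB])
    show "finite X" unfolding X_def matchings_with_counts_def
      using finite_perfect_matchings[OF finV finW] by simp
    show "f v \<in> (\<Union>j\<le>t. B j)" if "f \<in> X" for f
      using that vV UB by (auto simp: X_def matchings_with_counts_def perfect_matchings_def)
  qed
  moreover have "(\<Sum>j\<le>t. \<Sum>w\<in>B j. card {f \<in> X. f v = w}) * F = PA * PB"
  proof (rule sum_of_fibres[OF a0 rs[OF i0] finB _ fibre])
    show "e i0 j = 0" if "j \<le> t" "B j = {}" for j
      using member_le_sum[of i0 "{..s}" "\<lambda>i. e i j"] cs[OF that(1)] that(2) i0 by simp
  qed
  ultimately show ?case unfolding X_def F_def PA_def PB_def by simp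
qed

text \<open>With a single class on each side every perfect matching qualifies, so there are
  exactly n! perfect matchings.\<close>

lemma card_perfect_matchings:
  assumes "finite V" "finite W" "card V = card W"
  shows "card (perfect_matchings V W) = fact (card V)"
proof -
  have "contingency_setting V W (\<lambda>_. V) (\<lambda>_. W) 0 0 (\<lambda>_ _. card V)"
    using assms by (simp add: contingency_setting_def disjoint_family_on_def atMost_0)
  from card_matchings_with_counts[OF this]
  have "card (matchings_with_counts V W (\<lambda>_. V) (\<lambda>_. W) 0 0 (\<lambda>_ _. card V)) = fact (card W)"
    by (simp add: atMost_0)
  moreover have "matchings_with_counts V W (\<lambda>_. V) (\<lambda>_. W) 0 0 (\<lambda>_ _. card V)
               = perfect_matchings V W"
    by (auto simp: matchings_with_counts_def edge_count_def perfect_matchings_def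
             intro!: arg_cong[where f=card])
  ultimately show ?thesis using assms(3) by simp
qed

theorem matching_prob_eq:
  assumes G: "contingency_setting V W A B s t e"
  shows "matching_prob V W A B s t e
       = (\<Prod>i\<le>s. fact (card (A i))) * (\<Prod>j\<le>t. fact (card (B j)))
           / (fact (card V) * (\<Prod>i\<le>s. \<Prod>j\<le>t. fact (e i j)))"
proof -
  have finV: "finite V" and finW: "finite W" and cVW: "card V = card W"
    using G by (auto simp: contingency_setting_def)
  have finPM: "finite (perfect_matchings V W)" by (rule finite_perfect_matchings[OF finV finW])
  have cPM: "card (perfect_matchings V W) = fact (card V)"
    by (rule card_perfect_matchings[OF finV finW cVW])
  hence nePM: "perfect_matchings V W \<noteq> {}" by auto
  have "perfect_matchings V W \<inter> {f. \<forall>i\<le>s. \<forall>j\<le>t. edge_count f A B i j = e i j}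
      = matchings_with_counts V W A B s t e"
    by (auto simp: matchings_with_counts_def)
  hence "matching_prob V W A B s t e
       = real (card (matchings_with_counts V W A B s t e)) / fact (card V)"
    unfolding matching_prob_def using measure_pmf_of_set[OF nePM finPM] cPM by simp
  also have "\<dots> = real (card (matchings_with_counts V W A B s t e)) * (\<Prod>i\<le>s. \<Prod>j\<le>t. fact (e i j))
                   / (fact (card V) * (\<Prod>i\<le>s. \<Prod>j\<le>t. fact (e i j)))"
    by simp
  also have "real (card (matchings_with_counts V W A B s t e)) * (\<Prod>i\<le>s. \<Prod>j\<le>t. fact (e i j))
        = (\<Prod>i\<le>s. fact (card (A i))) * (\<Prod>j\<le>t. fact (card (B j)))"
    using arg_cong[OF card_matchings_with_counts[OF G], of real] by (simp add: of_nat_prod)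
  finally show ?thesis .
qed

section \<open>Estimating the factorial ratio\<close>

lemma ln_one_plus_ge_pade:
  fixes x :: real assumes "0 \<le> x" shows "2*x/(2+x) \<le> ln (1+x)"
proof -
  let ?f = "\<lambda>y::real. ln (1+y) - 2*y/(2+y)"
  have "?f 0 \<le> ?f x"
  proof (rule DERIV_nonneg_imp_nondecreasing[OF assms])
    fix y :: real assume y: "0 \<le> y" "y \<le> x"
    have d: "DERIV ?f y :> (1/(1+y) - 4/(2+y)^2)"
      using y by (auto intro!: derivative_eq_intros simp: field_simps power2_eq_square)
    have "1/(1+y) - 4/(2+y)^2 = y^2/((1+y)*(2+y)^2)"
      using y by (simp add: divide_simps power2_eq_square) (simp add: algebra_simps)
    also have "\<dots> \<ge> 0" using y by simp
    finally show "\<exists>d. DERIV ?f y :> d \<and> 0 \<le> d" using d by blast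
  qed
  thus ?thesis by simp
qed

lemma ln_one_plus_le_cubic:
  fixes x :: real assumes "0 \<le> x" shows "ln (1+x) \<le> x - x^2/2 + x^3/3"
proof -
  let ?f = "\<lambda>y::real. y - y^2/2 + y^3/3 - ln (1+y)"
  have "?f 0 \<le> ?f x"
  proof (rule DERIV_nonneg_imp_nondecreasing[OF assms])
    fix y :: real assume y: "0 \<le> y" "y \<le> x"
    have d: "DERIV ?f y :> (1 - y + y^2 - 1/(1+y))"
      using y by (auto intro!: derivative_eq_intros simp: field_simps power2_eq_square)
    have "1 - y + y^2 - 1/(1+y) = y^3/(1+y)"
      using y by (simp add: field_simps power2_eq_square power3_eq_cube)
    also have "\<dots> \<ge> 0" using y by simp
    finally show "\<exists>d. DERIV ?f y :> d \<and> 0 \<le> d" using d by blast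
  qed
  thus ?thesis by simp
qed

text \<open>The Stirling defect D(m) = ln m! - (m ln m - m), which is ln(2 pi m)/2 + o(1);
  we only need that it lies between ln(m+1)/2 and 1 + ln(m+1)/2.\<close>

definition stirling_defect :: "nat \<Rightarrow> real" where
  "stirling_defect m = ln (fact m) - real m * ln (real m) + real m"

lemma stirling_defect_Suc:
  "stirling_defect (Suc m) = stirling_defect m + 1 - real m * (ln (real m + 1) - ln (real m))"
proof -
  have "ln (fact (Suc m) :: real) = ln (real m + 1) + ln (fact m)"
    by (simp add: ln_mult add.commute)
  thus ?thesis by (simp add: stirling_defect_def algebra_simps)
qed

lemma ln_Suc_eq:
  assumes "1 \<le> m"
  shows "ln (real m + 1) = ln (real m) + ln (1 + 1 / real m)"
proof -
  have "real m + 1 = real m * (1 + 1 / real m)" using assms by (simp add: field_simps)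
  moreover have "0 < 1 + 1 / real m" using assms by (simp add: add_pos_pos)
  ultimately show ?thesis using assms by (simp only: ln_mult) simp
qed

lemma stirling_defect_step:
  assumes "1 \<le> m"
  shows "stirling_defect (Suc m) = stirling_defect m + 1 - real m * ln (1 + 1 / real m)"
  using stirling_defect_Suc[of m] ln_Suc_eq[OF assms] by simp

lemma stirling_defect_upper: "stirling_defect m \<le> 1 + ln (real m + 1) / 2"
proof -
  have pos: "stirling_defect m \<le> 1 + ln (real m) / 2" if "1 \<le> m" for m
    using that
  proof (induction m rule: dec_induct)
    case base then show ?case by (simp add: stirling_defect_def)
  next
    case (step m)
    define x where "x = 1 / real m"
    have m: "real m \<ge> 1" using step by simp
    have "2 / (2 * real m + 1) \<le> ln (1 + x)"
      using ln_one_plus_ge_pade[of x] m by (simp add: x_def field_simps)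
    hence "1 \<le> real m * ln (1 + x) + ln (1 + x) / 2" using m by (simp add: field_simps)
    moreover have "ln (real (Suc m)) = ln (real m) + ln (1 + x)"
      using ln_Suc_eq[OF step(1)] by (simp add: x_def add.commute)
    ultimately show ?case using step.IH stirling_defect_step[OF step(1), folded x_def]
      by linarith
  qed
  show ?thesis
  proof (cases "m = 0")
    case False
    hence "ln (real m) \<le> ln (real m + 1)" and "stirling_defect m \<le> 1 + ln (real m) / 2"
      by (simp_all add: pos)
    thus ?thesis by linarith
  qed (simp add: stirling_defect_def)
qed

lemma stirling_defect_lower: "ln (real m + 1) / 2 \<le> stirling_defect m"
proof -
  have pos: "ln (real m + 2) / 2 \<le> stirling_defect m" if "1 \<le> m" for m
    using that
  proof (induction m rule: dec_induct)
    case base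
    have "ln (3::real) \<le> 3 - 1" by (rule ln_le_minus_one) simp
    then show ?case by (simp add: stirling_defect_def)
  next
    case (step m)
    define x where "x = 1 / real m"
    have m: "real m \<ge> 1" using step by simp
    have "real m * (x - x^2/2 + x^3/3) = 1 - 1/(2*real m) + 1/(3*real m^2)"
      using m by (simp add: x_def field_simps power2_eq_square power3_eq_cube)
    hence increment: "real m * ln (1 + x) \<le> 1 - 1/(2*real m) + 1/(3*real m^2)"
      using mult_left_mono[OF ln_one_plus_le_cubic[of x], of "real m"] m by (simp add: x_def)
    have "1 + 1/(real m + 2) = (real (Suc m) + 2) / (real m + 2)" using m by (simp add: field_simps)
    hence "ln (real (Suc m) + 2) - ln (real m + 2) = ln (1 + 1/(real m + 2))"
      using m by (simp only: ln_div) simp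
    also have "\<dots> \<le> 1/(real m + 2)" by (rule ln_add_one_self_le_self) simp
    also have "\<dots> \<le> 2 * (1/(2*real m) - 1/(3*real m^2))"
      using m by (simp add: field_simps power2_eq_square)
    finally show ?case using step.IH increment stirling_defect_step[OF step(1), folded x_def]
      by argo
  qed
  show ?thesis
  proof (cases "m = 0")
    case False
    hence "ln (real m + 1) \<le> ln (real m + 2)" and "ln (real m + 2) / 2 \<le> stirling_defect m"
      by (simp, intro pos) simp
    thus ?thesis by linarith
  qed (simp add: stirling_defect_def)
qed

text \<open>ln(1+x) is subadditive on nonnegative reals, since (1+x)(1+y) >= 1 + x + y.\<close>

lemma ln_one_plus_sum_le:
  fixes x :: "'i \<Rightarrow> real"
  assumes "finite J" "\<And>j. j \<in> J \<Longrightarrow> 0 \<le> x j"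
  shows "ln (1 + sum x J) \<le> (\<Sum>j\<in>J. ln (1 + x j))"
  using assms
proof (induction J rule: finite_induct)
  case (insert y J)
  have xy: "0 \<le> x y" and S: "0 \<le> sum x J" using insert by (auto intro: sum_nonneg)
  have "ln (1 + sum x (insert y J)) = ln (1 + x y + sum x J)" using insert by (simp add: add.assoc)
  also have "\<dots> \<le> ln ((1 + x y) * (1 + sum x J))"
    by (rule ln_mono) (use xy S in \<open>auto simp: algebra_simps\<close>)
  also have "\<dots> = ln (1 + x y) + ln (1 + sum x J)" using xy S by (simp add: ln_mult)
  also have "\<dots> \<le> ln (1 + x y) + (\<Sum>j\<in>J. ln (1 + x j))" using insert by simp
  finally show ?case using insert by simp
qed simp

definition table_with_margins ::
    "nat \<Rightarrow> nat \<Rightarrow> (nat \<Rightarrow> nat) \<Rightarrow> (nat \<Rightarrow> nat) \<Rightarrow> (nat \<Rightarrow> nat \<Rightarrow> nat) \<Rightarrow> nat \<Rightarrow> bool" where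
  "table_with_margins s t a b e n \<longleftrightarrow>
     (\<forall>i\<le>s. 1 \<le> a i \<and> (\<Sum>j\<le>t. e i j) = a i) \<and>
     (\<forall>j\<le>t. 1 \<le> b j \<and> (\<Sum>i\<le>s. e i j) = b j) \<and> (\<Sum>i\<le>s. a i) = n"

lemma table_with_margins_sums:
  assumes "table_with_margins s t a b e n"
  shows "\<And>i. i \<le> s \<Longrightarrow> (\<Sum>j\<le>t. real (e i j)) = real (a i)"
    and "\<And>j. j \<le> t \<Longrightarrow> (\<Sum>i\<le>s. real (e i j)) = real (b j)"
    and "(\<Sum>i\<le>s. real (a i)) = real n" and "(\<Sum>j\<le>t. real (b j)) = real n"
    and "(\<Sum>i\<le>s. \<Sum>j\<le>t. real (e i j)) = real n"
    and "a 0 \<le> n" and "b 0 \<le> n" and "1 \<le> n"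
proof -
  have rs: "\<And>i. i \<le> s \<Longrightarrow> (\<Sum>j\<le>t. e i j) = a i" and cs: "\<And>j. j \<le> t \<Longrightarrow> (\<Sum>i\<le>s. e i j) = b j"
    and sa: "(\<Sum>i\<le>s. a i) = n" and a0: "1 \<le> a 0"
    using assms by (auto simp: table_with_margins_def)
  have "(\<Sum>j\<le>t. b j) = (\<Sum>j\<le>t. \<Sum>i\<le>s. e i j)" using cs by simp
  also have "\<dots> = (\<Sum>i\<le>s. \<Sum>j\<le>t. e i j)" by (rule sum.swap)
  also have "\<dots> = n" using rs sa by simp
  finally have sb: "(\<Sum>j\<le>t. b j) = n" .
  show "\<And>i. i \<le> s \<Longrightarrow> (\<Sum>j\<le>t. real (e i j)) = real (a i)"
    and "\<And>j. j \<le> t \<Longrightarrow> (\<Sum>i\<le>s. real (e i j)) = real (b j)"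
    and "(\<Sum>i\<le>s. real (a i)) = real n" and "(\<Sum>j\<le>t. real (b j)) = real n"
    using rs cs sa sb by (metis of_nat_sum)+
  thus "(\<Sum>i\<le>s. \<Sum>j\<le>t. real (e i j)) = real n" by simp
  show "a 0 \<le> n" using sa by (auto intro: member_le_sum[of 0 "{..s}" a, simplified])
  show "b 0 \<le> n" using sb by (auto intro: member_le_sum[of 0 "{..t}" b, simplified])
  show "1 \<le> n" using a0 \<open>a 0 \<le> n\<close> by simp
qed

lemma mu_times_bracket:
  fixes x a b n :: real
  assumes "x \<ge> 0" "a > 0" "b > 0" "n > 0"
  shows "(a*b/n) * bracket (x / (a*b/n) - 1) = x * ln x - x * ln a - x * ln b + x * ln n - x + a*b/n"
proof (cases "x = 0")
  case True then show ?thesis by (simp add: bracket_def)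
next
  case False
  define m where "m = a*b/n"
  define q where "q = x / m"
  have x: "x > 0" and m: "m > 0" using False assms by (auto simp: m_def)
  have mq: "m * q = x" using m by (simp add: q_def)
  have br: "bracket (q - 1) = q * ln q - (q - 1)" using x m by (simp add: bracket_def q_def)
  have "m * bracket (q - 1) = (m * q) * ln q - m * q + m" unfolding br by (simp add: algebra_simps)
  also have "ln q = ln x - ln a - ln b + ln n"
    using x assms by (simp add: q_def m_def ln_div ln_mult)
  finally show ?thesis by (simp add: mq m_def[symmetric] q_def[symmetric] algebra_simps)
qed

text \<open>Summed over the table, the terms e ln a, e ln b, e ln n, e and mu collapse by the
  margin conditions, leaving an entropy-type expression.\<close>

lemma bracket_sum_eq:
  assumes T: "table_with_margins s t a b e n"
  shows "(\<Sum>i\<le>s. \<Sum>j\<le>t. (real (a i) * real (b j) / real n)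
            * bracket (real (e i j) / (real (a i) * real (b j) / real n) - 1))
       = (\<Sum>i\<le>s. \<Sum>j\<le>t. real (e i j) * ln (real (e i j)))
           - (\<Sum>i\<le>s. real (a i) * ln (real (a i))) - (\<Sum>j\<le>t. real (b j) * ln (real (b j)))
           + real n * ln (real n)"
proof -
  note sums = table_with_margins_sums[OF T]
  have pos: "0 < real (a i)" "0 < real (b j)" if "i \<le> s" "j \<le> t" for i j
    using T that by (auto simp: table_with_margins_def)
  have "(\<Sum>i\<le>s. \<Sum>j\<le>t. (real (a i) * real (b j) / real n)
            * bracket (real (e i j) / (real (a i) * real (b j) / real n) - 1))
      = (\<Sum>i\<le>s. \<Sum>j\<le>t. real (e i j) * ln (real (e i j)) - real (e i j) * ln (real (a i))
          - real (e i j) * ln (real (b j)) + real (e i j) * ln (real n) - real (e i j)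
          + real (a i) * real (b j) / real n)"
    using pos sums(8) by (intro sum.cong refl mu_times_bracket) auto
  moreover have "(\<Sum>i\<le>s. \<Sum>j\<le>t. real (e i j) * ln (real (a i))) = (\<Sum>i\<le>s. real (a i) * ln (real (a i)))"
    using sums(1) by (simp add: sum_distrib_right[symmetric])
  moreover have "(\<Sum>i\<le>s. \<Sum>j\<le>t. real (e i j) * ln (real (b j))) = (\<Sum>j\<le>t. real (b j) * ln (real (b j)))"
    using sums(2) by (subst sum.swap) (simp add: sum_distrib_right[symmetric])
  moreover have "(\<Sum>i\<le>s. \<Sum>j\<le>t. real (e i j) * ln (real n)) = real n * ln (real n)"
    using sums(5) by (simp add: sum_distrib_right[symmetric])
  moreover have "(\<Sum>i\<le>s. \<Sum>j\<le>t. real (a i) * real (b j) / real n) = real n"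
    using sums(3,4,8) by (simp add: sum_distrib_left[symmetric] sum_divide_distrib[symmetric]
                                   sum_distrib_right[symmetric])
  ultimately show ?thesis using sums(5) by (simp add: sum.distrib sum_subtractf)
qed

text \<open>The exact identity behind the estimate: the log of the factorial ratio plus the
  exponent sum is a signed sum of Stirling defects; all m ln m - m terms cancel.\<close>

lemma log_ratio_plus_bracket_sum:
  assumes T: "table_with_margins s t a b e n"
  shows "ln ((\<Prod>i\<le>s. fact (a i)) * (\<Prod>j\<le>t. fact (b j)) / (fact n * (\<Prod>i\<le>s. \<Prod>j\<le>t. fact (e i j))))
         + (\<Sum>i\<le>s. \<Sum>j\<le>t. (real (a i) * real (b j) / real n)
              * bracket (real (e i j) / (real (a i) * real (b j) / real n) - 1))
       = (\<Sum>i\<le>s. stirling_defect (a i)) + (\<Sum>j\<le>t. stirling_defect (b j)) - stirling_defect n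
           - (\<Sum>i\<le>s. \<Sum>j\<le>t. stirling_defect (e i j))"
proof -
  note sums = table_with_margins_sums[OF T]
  have ln_fact: "ln (fact m) = stirling_defect m + real m * ln (real m) - real m" for m
    by (simp add: stirling_defect_def)
  have "ln ((\<Prod>i\<le>s. fact (a i)) * (\<Prod>j\<le>t. fact (b j)) / (fact n * (\<Prod>i\<le>s. \<Prod>j\<le>t. fact (e i j))))
      = (\<Sum>i\<le>s. ln (fact (a i))) + (\<Sum>j\<le>t. ln (fact (b j))) - ln (fact n :: real)
          - (\<Sum>i\<le>s. \<Sum>j\<le>t. ln (fact (e i j)))"
    by (simp add: ln_div ln_mult prod_pos ln_prod)
  thus ?thesis unfolding bracket_sum_eq[OF T] ln_fact using sums(3,4,5)
    by (simp add: sum.distrib sum_subtractf)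
qed

lemma ln_plus_one_le: "1 \<le> x \<Longrightarrow> ln (x + 1) \<le> ln 2 + ln x" for x :: real
  using ln_mono[of "x + 1" "2 * x"] by (simp add: ln_mult)

lemma sum_atMost_split_zero: "(\<Sum>i\<le>s. f i) = f 0 + (\<Sum>i=1..s. f i)"
  for f :: "nat \<Rightarrow> 'a::comm_monoid_add"
proof -
  have "{..s} = insert 0 {1..s}" by auto
  thus ?thesis by simp
qed

text \<open>The Stirling defects of the margins exceed those of the entries by at most
  s + t + 2 plus a quarter of the logarithms of a_1..a_s, b_1..b_t: by the defect bounds
  and subadditivity, ln(a_i+1) and ln(b_j+1) are dominated by the entries' ln(e_ij+1),
  and the terms for a_0, b_0 are absorbed by the defect of n.\<close>

lemma defect_combination_bound:
  assumes T: "table_with_margins s t a b e n"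
  shows "(\<Sum>i\<le>s. stirling_defect (a i)) + (\<Sum>j\<le>t. stirling_defect (b j)) - stirling_defect n
           - (\<Sum>i\<le>s. \<Sum>j\<le>t. stirling_defect (e i j))
       \<le> real s + real t + 2
           + (real s * ln 2 + real t * ln 2 + (\<Sum>i=1..s. ln (real (a i))) + (\<Sum>j=1..t. ln (real (b j)))) / 4"
proof -
  note sums = table_with_margins_sums[OF T]
  have a1: "1 \<le> a i" if "i \<le> s" for i using T that by (simp add: table_with_margins_def)
  have b1: "1 \<le> b j" if "j \<le> t" for j using T that by (simp add: table_with_margins_def)
  define E where "E = (\<Sum>i\<le>s. \<Sum>j\<le>t. ln (real (e i j) + 1))"
  have DA: "(\<Sum>i\<le>s. stirling_defect (a i)) \<le> real s + 1 + (\<Sum>i\<le>s. ln (real (a i) + 1)) / 2"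
    using sum_mono[of "{..s}" "\<lambda>i. stirling_defect (a i)", OF stirling_defect_upper]
    by (simp add: sum.distrib sum_divide_distrib)
  have DB: "(\<Sum>j\<le>t. stirling_defect (b j)) \<le> real t + 1 + (\<Sum>j\<le>t. ln (real (b j) + 1)) / 2"
    using sum_mono[of "{..t}" "\<lambda>j. stirling_defect (b j)", OF stirling_defect_upper]
    by (simp add: sum.distrib sum_divide_distrib)
  have DE: "E / 2 \<le> (\<Sum>i\<le>s. \<Sum>j\<le>t. stirling_defect (e i j))"
    unfolding E_def sum_divide_distrib by (intro sum_mono stirling_defect_lower)
  have rows: "(\<Sum>i\<le>s. ln (real (a i) + 1)) \<le> E"
    unfolding E_def
  proof (rule sum_mono)
    fix i assume "i \<in> {..s}"
    thus "ln (real (a i) + 1) \<le> (\<Sum>j\<le>t. ln (real (e i j) + 1))"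
      using ln_one_plus_sum_le[of "{..t}" "\<lambda>j. real (e i j)"] sums(1)[of i] by (simp add: add.commute)
  qed
  have "(\<Sum>j\<le>t. ln (real (b j) + 1)) \<le> (\<Sum>j\<le>t. \<Sum>i\<le>s. ln (real (e i j) + 1))"
  proof (rule sum_mono)
    fix j assume "j \<in> {..t}"
    thus "ln (real (b j) + 1) \<le> (\<Sum>i\<le>s. ln (real (e i j) + 1))"
      using ln_one_plus_sum_le[of "{..s}" "\<lambda>i. real (e i j)"] sums(2)[of j] by (simp add: add.commute)
  qed
  hence cols: "(\<Sum>j\<le>t. ln (real (b j) + 1)) \<le> E" unfolding E_def by (subst sum.swap)
  have A0: "ln (real (a 0) + 1) \<le> ln (real n + 1)" and B0: "ln (real (b 0) + 1) \<le> ln (real n + 1)"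
    using sums(6,7) by simp_all
  have AS: "(\<Sum>i=1..s. ln (real (a i) + 1)) \<le> real s * ln 2 + (\<Sum>i=1..s. ln (real (a i)))"
    using sum_mono[of "{1..s}" "\<lambda>i. ln (real (a i) + 1)" "\<lambda>i. ln 2 + ln (real (a i))"]
      ln_plus_one_le a1 by (simp add: sum.distrib)
  have BS: "(\<Sum>j=1..t. ln (real (b j) + 1)) \<le> real t * ln 2 + (\<Sum>j=1..t. ln (real (b j)))"
    using sum_mono[of "{1..t}" "\<lambda>j. ln (real (b j) + 1)" "\<lambda>j. ln 2 + ln (real (b j))"]
      ln_plus_one_le b1 by (simp add: sum.distrib)
  show ?thesis
    using DA DB DE rows cols A0 B0 AS BS stirling_defect_lower[of n]
      sum_atMost_split_zero[of "\<lambda>i. ln (real (a i) + 1)" s]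
      sum_atMost_split_zero[of "\<lambda>j. ln (real (b j) + 1)" t]
    by argo
qed

theorem factorial_ratio_bound:
  assumes T: "table_with_margins s t a b e n"
  shows "(\<Prod>i\<le>s. fact (a i)) * (\<Prod>j\<le>t. fact (b j)) / (fact n * (\<Prod>i\<le>s. \<Prod>j\<le>t. fact (e i j)))
     \<le> exp (real s + real t + 2 + (real s * ln 2 + real t * ln 2) / 4)
        * ((\<Prod>i=1..s. real (a i)) * (\<Prod>j=1..t. real (b j))) powr (1/4)
        * exp (- (\<Sum>i\<le>s. \<Sum>j\<le>t. (real (a i) * real (b j) / real n)
                 * bracket (real (e i j) / (real (a i) * real (b j) / real n) - 1)))"
    (is "?P \<le> exp ?K * ?\<Pi> powr (1/4) * exp (- ?S)")
proof -
  have posA: "0 < real (a i)" if "i \<le> s" for i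
    using T that by (auto simp: table_with_margins_def)
  have posB: "0 < real (b j)" if "j \<le> t" for j
    using T that by (auto simp: table_with_margins_def)
  have prodA: "0 < (\<Prod>i=1..s. real (a i))" and prodB: "0 < (\<Prod>j=1..t. real (b j))"
    using posA posB by (auto intro!: prod_pos)
  have "ln (\<Prod>i=1..s. real (a i)) = (\<Sum>i=1..s. ln (real (a i)))"
    by (rule ln_prod) (use posA in auto)
  moreover have "ln (\<Prod>j=1..t. real (b j)) = (\<Sum>j=1..t. ln (real (b j)))"
    by (rule ln_prod) (use posB in auto)
  ultimately have "ln ?\<Pi> = (\<Sum>i=1..s. ln (real (a i))) + (\<Sum>j=1..t. ln (real (b j)))"
    using prodA prodB by (simp add: ln_mult_pos)
  hence log_bound: "ln ?P \<le> ?K + ln ?\<Pi> / 4 - ?S"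
    using log_ratio_plus_bracket_sum[OF T] defect_combination_bound[OF T] by argo
  have "0 < ?P" by (intro divide_pos_pos mult_pos_pos prod_pos) auto
  hence "?P \<le> exp (?K + ln ?\<Pi> / 4 - ?S)"
    using log_bound exp_le_cancel_iff[of "ln ?P" "?K + ln ?\<Pi> / 4 - ?S"] by simp
  also have "\<dots> = exp ?K * exp (ln ?\<Pi> / 4) * exp (- ?S)"
    by (simp only: diff_conv_add_uminus exp_add)
  also have "exp (ln ?\<Pi> / 4) = ?\<Pi> powr (1/4)"
    using posA posB by (auto simp: powr_def)
  finally show ?thesis .
qed

lemma indexed_partition_facts:
  assumes P: "indexed_partition V A s" and finV: "finite V"
  shows "disjoint_family_on A {..s}" and "(\<Union>i\<le>s. A i) = V"
    and "\<And>i. i \<le> s \<Longrightarrow> 1 \<le> card (A i)" and "(\<Sum>i\<le>s. card (A i)) = card V"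
proof -
  show disj: "disjoint_family_on A {..s}" and cover: "(\<Union>i\<le>s. A i) = V"
    using P by (auto simp: indexed_partition_def disjoint_family_on_def)
  have finA: "finite (A i)" if "i \<le> s" for i using cover finV that by (auto intro: finite_subset)
  show "1 \<le> card (A i)" if "i \<le> s" for i
    using P finA[OF that] that by (auto simp: indexed_partition_def Suc_le_eq card_gt_0_iff)
  show "(\<Sum>i\<le>s. card (A i)) = card V"
    using card_UN_disjoint[of "{..s}" A] disj finA cover by (auto simp: disjoint_family_on_def)
qed

theorem corollary4p2:
  fixes s t :: nat
  shows "\<exists>C::real. \<forall>(n::nat) (V::nat set) (W::nat set) (A::nat \<Rightarrow> nat set) (B::nat \<Rightarrow> nat set)
            (e::nat \<Rightarrow> nat \<Rightarrow> nat).
     finite V \<and> finite W \<and> card V = n \<and> card W = n \<and>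
     indexed_partition V A s \<and> indexed_partition W B t \<and>
     (\<forall>i\<le>s. (\<Sum>j\<le>t. e i j) = card (A i)) \<and>
     (\<forall>j\<le>t. (\<Sum>i\<le>s. e i j) = card (B j)) \<longrightarrow>
     (let \<mu> = (\<lambda>i j. real (card (A i)) * real (card (B j)) / real n);
          \<epsilon> = (\<lambda>i j. real (e i j) / \<mu> i j - 1)
      in matching_prob V W A B s t e
         \<le> C * ((\<Prod>i=1..s. real (card (A i))) * (\<Prod>j=1..t. real (card (B j)))) powr (1/4)
             * exp (- (\<Sum>i\<le>s. \<Sum>j\<le>t. \<mu> i j * bracket (\<epsilon> i j))))"
proof (intro exI allI impI)
  fix n V W A B e
  assume H: "finite V \<and> finite W \<and> card V = n \<and> card W = n \<and>
     indexed_partition V A s \<and> indexed_partition W B t \<and>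
     (\<forall>i\<le>s. (\<Sum>j\<le>t. e i j) = card (A i)) \<and> (\<forall>j\<le>t. (\<Sum>i\<le>s. e i j) = card (B j))"
  hence finV: "finite V" and finW: "finite W" and cV: "card V = n" and cW: "card W = n"
    and PA: "indexed_partition V A s" and PB: "indexed_partition W B t" by auto
  note A = indexed_partition_facts[OF PA finV] and B = indexed_partition_facts[OF PB finW]
  have G: "contingency_setting V W A B s t e"
    using H A(1,2) B(1,2) by (simp add: contingency_setting_def)
  have T: "table_with_margins s t (\<lambda>i. card (A i)) (\<lambda>j. card (B j)) e n"
    using H A(3,4) B(3) cV by (simp add: table_with_margins_def)
  show "let \<mu> = (\<lambda>i j. real (card (A i)) * real (card (B j)) / real n);
          \<epsilon> = (\<lambda>i j. real (e i j) / \<mu> i j - 1)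
      in matching_prob V W A B s t e
         \<le> exp (real s + real t + 2 + (real s * ln 2 + real t * ln 2) / 4)
             * ((\<Prod>i=1..s. real (card (A i))) * (\<Prod>j=1..t. real (card (B j)))) powr (1/4)
             * exp (- (\<Sum>i\<le>s. \<Sum>j\<le>t. \<mu> i j * bracket (\<epsilon> i j)))"
    unfolding Let_def matching_prob_eq[OF G] cV by (rule factorial_ratio_bound[OF T])
qed

end
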